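(* Assume $R_\phi(\mathbf{w})$ has a unique minimizer $\mathbf{w}_{\mathrm{sup}}$ and that $\phi$ is decreasing, i.e. $\phi(a)\ge\phi(b)$ whenever $a\le b$. Then there is no $\mathbf{w}_{\mathrm{semi}}\in\mathbb{R}^d$ that satisfies both of the following: (i) $\max_{\mathbf{q}\in\{0,1\}^U} D_\phi(\mathbf{w}_{\mathrm{semi}},\mathbf{q})\le 0$; (ii) there exists $\mathbf{q}^\ast\in\{0,1\}^U$ with $D_\phi(\mathbf{w}_{\mathrm{semi}},\mathbf{q}^\ast)<0$.
   Context: Fix integers $L,U,d\ge 1$. Let $\mathbf{X}\in\mathbb{R}^{L\times d}$ be a matrix whose rows $\mathbf{x}_1^\top,\dots,\mathbf{x}_L^\top$ are the labeled objects, with labels $\mathbf{y}\in\{-1,+1\}^L$. Let $\mathbf{X}_{\mathrm{u}}\in\mathbb{R}^{U\times d}$ be a matrix whose rows $\mathbf{x}_{\mathrm{u},1}^\top,\dots,\mathbf{x}_{\mathrm{u},U}^\top$ are the unlabeled objects. Let $\phi:\mathbb{R}\to\mathbb{R}$ be a loss function, $\Omega:\mathbb{R}^d\to\mathbb{R}$ a convex function and $\lambda\ge 0$. The supervised risk is $R_\phi(\mathbf{w})=\sum_{i=1}^L\phi(y_i\mathbf{x}_i^\top\mathbf{w})+\lambda\Omega(\mathbf{w})$. For responsibilities $\mathbf{q}\in[0,1]^U$ the semi-supervised risk is $R^{\mathrm{semi}}_\phi(\mathbf{w},\mathbf{q})=R_\phi(\mathbf{w})+\sum_{j=1}^U\big[q_j\phi(\mathbf{x}_{\mathrm{u},j}^\top\mathbf{w})+(1-q_j)\phi(-\mathbf{x}_{\mathrm{u},j}^\top\mathbf{w})\big]$.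 Given the minimizer $\mathbf{w}_{\mathrm{sup}}$ of $R_\phi$, define $D_\phi(\mathbf{w},\mathbf{q})=R^{\mathrm{semi}}_\phi(\mathbf{w},\mathbf{q})-R^{\mathrm{semi}}_\phi(\mathbf{w}_{\mathrm{sup}},\mathbf{q})$. *)

theory Defs
  imports "HOL-Analysis.Analysis"
begin

definition sup_risk ::
  "(real \<Rightarrow> real) \<Rightarrow> (real^'d \<Rightarrow> real) \<Rightarrow> real \<Rightarrow>
   ('l::finite \<Rightarrow> real^'d) \<Rightarrow> ('l \<Rightarrow> real) \<Rightarrow> real^'d \<Rightarrow> real" where
  "sup_risk \<phi> \<Omega> lam X y w = (\<Sum>i\<in>UNIV. \<phi> (y i * (X i \<bullet> w))) + lam * \<Omega> w"

definition semi_risk ::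
  "(real \<Rightarrow> real) \<Rightarrow> (real^'d \<Rightarrow> real) \<Rightarrow> real \<Rightarrow>
   ('l::finite \<Rightarrow> real^'d) \<Rightarrow> ('l \<Rightarrow> real) \<Rightarrow> ('u::finite \<Rightarrow> real^'d) \<Rightarrow>
   real^'d \<Rightarrow> ('u \<Rightarrow> real) \<Rightarrow> real" where
  "semi_risk \<phi> \<Omega> lam X y Xu w q = sup_risk \<phi> \<Omega> lam X y w +
     (\<Sum>j\<in>UNIV. q j * \<phi> (Xu j \<bullet> w) + (1 - q j) * \<phi> (- (Xu j \<bullet> w)))"

definition D_risk ::
  "(real \<Rightarrow> real) \<Rightarrow> (real^'d \<Rightarrow> real) \<Rightarrow> real \<Rightarrow>
   ('l::finite \<Rightarrow> real^'d) \<Rightarrow> ('l \<Rightarrow> real) \<Rightarrow> ('u::finite \<Rightarrow> real^'d) \<Rightarrow>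
   real^'d \<Rightarrow> real^'d \<Rightarrow> ('u \<Rightarrow> real) \<Rightarrow> real" where
  "D_risk \<phi> \<Omega> lam X y Xu wsup w q =
     semi_risk \<phi> \<Omega> lam X y Xu w q - semi_risk \<phi> \<Omega> lam X y Xu wsup q"

end

theory Submission
  imports Defs
begin

text \<open>If \<open>w \<noteq> w\<^sub>s\<^sub>u\<^sub>p\<close>, uniqueness makes the supervised risk of \<open>w\<close> strictly larger. Labelling
  each unlabeled point by the side on which \<open>w\<^sub>s\<^sub>u\<^sub>p\<close> scores it higher than \<open>w\<close> does, a
  decreasing loss charges \<open>w\<close> at least as much as \<open>w\<^sub>s\<^sub>u\<^sub>p\<close> on every unlabeled term, so
  \<open>D(w, q) > 0\<close> for this hard labelling and (i) fails. If \<open>w = w\<^sub>s\<^sub>u\<^sub>p\<close>, \<open>D\<close> vanishes and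
  (ii) fails.\<close>

definition pessimistic_label :: "real \<Rightarrow> real \<Rightarrow> real" where
  "pessimistic_label a b = (if a \<le> b then 1 else 0)"

lemma pessimistic_label_01: "pessimistic_label a b \<in> {0, 1}"
  by (simp add: pessimistic_label_def)

lemma pessimistic_label_loss_ge:
  fixes \<phi> :: "real \<Rightarrow> real"
  assumes "antimono \<phi>"
  shows "pessimistic_label a b * \<phi> b + (1 - pessimistic_label a b) * \<phi> (- b)
    \<le> pessimistic_label a b * \<phi> a + (1 - pessimistic_label a b) * \<phi> (- a)"
  using assms by (simp add: pessimistic_label_def antimonoD)

lemma D_risk_pos_if_sup_risk_greater:
  fixes \<phi> :: "real \<Rightarrow> real" and Xu :: "'u::finite \<Rightarrow> real^'d"
  assumes "antimono \<phi>"
    and "sup_risk \<phi> \<Omega> lam X y wsup < sup_risk \<phi> \<Omega> lam X y w"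
  shows "D_risk \<phi> \<Omega> lam X y Xu wsup w (\<lambda>j. pessimistic_label (Xu j \<bullet> w) (Xu j \<bullet> wsup)) > 0"
proof -
  let ?q = "\<lambda>j. pessimistic_label (Xu j \<bullet> w) (Xu j \<bullet> wsup)"
  have "(\<Sum>j\<in>UNIV. ?q j * \<phi> (Xu j \<bullet> wsup) + (1 - ?q j) * \<phi> (- (Xu j \<bullet> wsup)))
      \<le> (\<Sum>j\<in>UNIV. ?q j * \<phi> (Xu j \<bullet> w) + (1 - ?q j) * \<phi> (- (Xu j \<bullet> w)))"
    by (intro sum_mono pessimistic_label_loss_ge assms(1))
  with assms(2) show ?thesis
    unfolding D_risk_def semi_risk_def by linarith
qed

theorem theorem1:
  fixes \<phi> :: "real \<Rightarrow> real" and \<Omega> :: "real^'d \<Rightarrow> real" and lam :: real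
    and X :: "'l::finite \<Rightarrow> real^'d" and y :: "'l \<Rightarrow> real"
    and Xu :: "'u::finite \<Rightarrow> real^'d" and wsup :: "real^'d"
  assumes y_sign: "\<forall>i. y i \<in> {-1, 1}"
    and Omega_convex: "convex_on UNIV \<Omega>"
    and lambda_nonneg: "lam \<ge> 0"
    and wsup_min: "\<forall>w. sup_risk \<phi> \<Omega> lam X y wsup \<le> sup_risk \<phi> \<Omega> lam X y w"
    and wsup_unique: "\<forall>w. sup_risk \<phi> \<Omega> lam X y w \<le> sup_risk \<phi> \<Omega> lam X y wsup \<longrightarrow> w = wsup"
    and phi_decr: "\<forall>a b. a \<le> b \<longrightarrow> \<phi> a \<ge> \<phi> b"
  shows "\<not> (\<exists>wsemi :: real^'d.
            (\<forall>q. (\<forall>j. q j \<in> {0, 1}) \<longrightarrow> D_risk \<phi> \<Omega> lam X y Xu wsup wsemi q \<le> 0) \<and>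
            (\<exists>q. (\<forall>j. q j \<in> {0, 1}) \<and> D_risk \<phi> \<Omega> lam X y Xu wsup wsemi q < 0))"
proof
  assume "\<exists>wsemi :: real^'d.
            (\<forall>q. (\<forall>j. q j \<in> {0, 1}) \<longrightarrow> D_risk \<phi> \<Omega> lam X y Xu wsup wsemi q \<le> 0) \<and>
            (\<exists>q. (\<forall>j. q j \<in> {0, 1}) \<and> D_risk \<phi> \<Omega> lam X y Xu wsup wsemi q < 0)"
  then obtain w where nonpos: "\<forall>q. (\<forall>j. q j \<in> {0, 1}) \<longrightarrow> D_risk \<phi> \<Omega> lam X y Xu wsup w q \<le> 0"
    and neg: "\<exists>q. D_risk \<phi> \<Omega> lam X y Xu wsup w q < 0"
    by blast
  have "w \<noteq> wsup"
    using neg by (auto simp: D_risk_def)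
  then have "sup_risk \<phi> \<Omega> lam X y wsup < sup_risk \<phi> \<Omega> lam X y w"
    using wsup_unique by (meson not_le)
  moreover have "antimono \<phi>"
    using phi_decr by (simp add: antimono_def)
  ultimately have "D_risk \<phi> \<Omega> lam X y Xu wsup w
      (\<lambda>j. pessimistic_label (Xu j \<bullet> w) (Xu j \<bullet> wsup)) > 0"
    by (simp add: D_risk_pos_if_sup_risk_greater)
  with nonpos pessimistic_label_01 show False
    by (meson not_le)
qed

end
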